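(* For $1\le a\le n$ and all $u\in\mathbb C$, \[ T^{(a)}_1(u)=\sum_{1\le i_1<i_2<\cdots<i_a\le N}\ \prod_{k=1}^a x_{i_k}\Bigl(u+\frac a2-k\Bigr). \]
   Context: Fix an integer $n\ge 2$ and put $N=2n+2$. Let $Q_a(u)$ ($1\le a\le n$, $u\in\mathbb C$) be algebraically independent commuting indeterminates. Put $d_a=1+\delta_{an}$, $Y_a(u)=Q_a(u-\frac{d_a}{2})/Q_a(u+\frac{d_a}{2})$ for $1\le a\le n$, $Y_0(u)=1$. Let $J=\{1\prec2\prec\cdots\prec n\prec\bar n\prec\cdots\prec\bar2\prec\bar1\}$ be a totally ordered set. For $1\le a\le n$ set $z_a(u)=\frac{Y_a(u+\frac a2)}{Y_{a-1}(u+\frac{a+1}2)}$, $z_{\bar a}(u)=\frac{Y_{a-1}(u+\frac{2n-a+3}2)}{Y_a(u+\frac{2n-a+4}2)}$; set $x_a(u)=z_a(u)$, $x_{2n+3-a}(u)=z_{\bar a}(u)$ for $1\le a\le n$, and $x_{n+1}(u)=-x_{n+2}(u)=\frac{Q_n(u+\frac n2)Q_n(u+\frac{n+4}2)}{Q_n(u+\frac{n+2}2)^2}$. For $1\le a\le n$ define $T^{(a)}_1(u)$ by $T^{(a)}_1(u+\frac12)=\sum z_{i_1}(u+\frac{a-1}2)z_{i_2}(u+\frac{a-3}2)\cdots z_{i_a}(u-\frac{a-1}2)$, the sum running over $(i_1,\dots,i_a)\in J^a$ with $i_1\prec\cdots\prec i_a$ such that whenever $i_k=c$ and $i_l=\bar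 c$ for some $1\le c\le n$, one has $n+k-l\ge c$. *)

theory Defs
  imports Complex_Main "HOL-Library.FuncSet"
begin

text \<open>Parameters: the rank n and the family Q, where Q a u stands for the
indeterminate Q_a(u) (1 <= a <= n), evaluated in the complex numbers.\<close>

definition dd :: "nat \<Rightarrow> nat \<Rightarrow> complex" where
  "dd n a = (if a = n then 2 else 1)"

definition YY :: "nat \<Rightarrow> (nat \<Rightarrow> complex \<Rightarrow> complex) \<Rightarrow> nat \<Rightarrow> complex \<Rightarrow> complex" where
  "YY n Q a u = (if a = 0 then 1 else Q a (u - dd n a / 2) / Q a (u + dd n a / 2))"

definition zu :: "nat \<Rightarrow> (nat \<Rightarrow> complex \<Rightarrow> complex) \<Rightarrow> nat \<Rightarrow> complex \<Rightarrow> complex" where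
  "zu n Q a u = YY n Q a (u + of_nat a / 2) / YY n Q (a - 1) (u + (of_nat a + 1) / 2)"

definition zb :: "nat \<Rightarrow> (nat \<Rightarrow> complex \<Rightarrow> complex) \<Rightarrow> nat \<Rightarrow> complex \<Rightarrow> complex" where
  "zb n Q a u = YY n Q (a - 1) (u + (2 * of_nat n - of_nat a + 3) / 2)
              / YY n Q a (u + (2 * of_nat n - of_nat a + 4) / 2)"

text \<open>The totally ordered set J = {1 < ... < n < bar n < ... < bar 1} is encoded
as {1..2n}: j <= n encodes j, and j > n encodes bar (2n+1-j).\<close>
definition zJ :: "nat \<Rightarrow> (nat \<Rightarrow> complex \<Rightarrow> complex) \<Rightarrow> nat \<Rightarrow> complex \<Rightarrow> complex" where
  "zJ n Q j u = (if j \<le> n then zu n Q j u else zb n Q (2 * n + 1 - j) u)"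

definition xmid :: "nat \<Rightarrow> (nat \<Rightarrow> complex \<Rightarrow> complex) \<Rightarrow> complex \<Rightarrow> complex" where
  "xmid n Q u = Q n (u + of_nat n / 2) * Q n (u + (of_nat n + 4) / 2)
               / (Q n (u + (of_nat n + 2) / 2))^2"

text \<open>x_i for 1 <= i <= N = 2n+2\<close>
definition xx :: "nat \<Rightarrow> (nat \<Rightarrow> complex \<Rightarrow> complex) \<Rightarrow> nat \<Rightarrow> complex \<Rightarrow> complex" where
  "xx n Q i u = (if i \<le> n then zu n Q i u
                 else if i = n + 1 then xmid n Q u
                 else if i = n + 2 then - xmid n Q u
                 else zb n Q (2 * n + 3 - i) u)"

definition admissible :: "nat \<Rightarrow> nat \<Rightarrow> (nat \<Rightarrow> nat) set" where
  "admissible n a = {i \<in> {1..a} \<rightarrow>\<^sub>E {1..2 * n}.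
      (\<forall>k\<in>{1..a}. \<forall>l\<in>{1..a}. k < l \<longrightarrow> i k < i l) \<and>
      (\<forall>k\<in>{1..a}. \<forall>l\<in>{1..a}. \<forall>c\<in>{1..n}.
          i k = c \<and> i l = 2 * n + 1 - c \<longrightarrow> int n + int k - int l \<ge> int c)}"

text \<open>T^{(a)}_1 defined via T^{(a)}_1(u + 1/2) = sum ..., i.e. T1 a u is the sum at u - 1/2.\<close>
definition Tsum :: "nat \<Rightarrow> (nat \<Rightarrow> complex \<Rightarrow> complex) \<Rightarrow> nat \<Rightarrow> complex \<Rightarrow> complex" where
  "Tsum n Q a u = (\<Sum>i\<in>admissible n a.
      \<Prod>k\<in>{1..a}. zJ n Q (i k) (u + (of_nat a - 2 * of_nat k + 1) / 2))"

definition T1 :: "nat \<Rightarrow> (nat \<Rightarrow> complex \<Rightarrow> complex) \<Rightarrow> nat \<Rightarrow> complex \<Rightarrow> complex" where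
  "T1 n Q a u = Tsum n Q a (u - 1 / 2)"

end

theory Submission
  imports Defs
begin

(* Encoding increasing tuples by their sets of entries turns both sides into sums of weights
   of words. On the right, the subsets of {1..2n+2} containing exactly one of the middle
   letters n+1, n+2 cancel in pairs because x_{n+1} = -x_{n+2}; those containing neither give
   the sum over all a-subsets X of J = {1..2n}, and those containing both give, since
   x_{n+1}(t) x_{n+2}(t-1) = -z_n(t) z_{bar n}(t-1), minus the sum over the (a-2)-subsets M of J
   of the words with n, bar n inserted in the middle of M. So it suffices that the
   non-admissible X have the same total weight as these words.
   X violates admissibility at c if c and bar c lie in X with at least n - c elements of X
   between them; at the largest violation there are exactly n - c. Replacing X on the window
   [c, bar c] by the complement of its mirror image then removes two elements, and choosing the
   largest such c on both sides makes this a bijection. It preserves weights by the exchange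
   relation z_f(t) z_{bar f}(t-n+f-1) = z_{f+1}(t) z_{bar (f+1)}(t-n+f-1), applied from the
   outside of the window inwards. *)

abbreviation bar :: "nat \<Rightarrow> nat \<Rightarrow> nat" where
  "bar n x \<equiv> 2 * n + 1 - x"

section \<open>Weights of words\<close>

fun word_weight :: "('a \<Rightarrow> 'b::ring_1 \<Rightarrow> 'c::comm_monoid_mult) \<Rightarrow> 'a list \<Rightarrow> 'b \<Rightarrow> 'c" where
  "word_weight g [] v = 1"
| "word_weight g (x # xs) v = g x v * word_weight g xs (v - 1)"

lemma word_weight_append:
  "word_weight g (xs @ ys) v = word_weight g xs v * word_weight g ys (v - of_nat (length xs))"
  by (induction xs arbitrary: v) (auto simp: algebra_simps)

lemma word_weight_replicate: "word_weight g (replicate k x) v = (\<Prod>i<k. g x (v - of_nat i))"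
  by (induction k arbitrary: v)
     (simp_all add: prod.lessThan_Suc_shift algebra_simps del: prod.lessThan_Suc)

lemma word_weight_cong:
  "(\<And>x. x \<in> set xs \<Longrightarrow> g x = h x) \<Longrightarrow> word_weight g xs v = word_weight h xs v"
  by (induction xs arbitrary: v) auto

lemma word_weight_map: "word_weight g (map f xs) v = word_weight (g \<circ> f) xs v"
  by (induction xs arbitrary: v) auto

lemma word_weight_map_upt:
  "word_weight g (map i [1..<Suc a]) (v - 1) = (\<Prod>k=1..a. g (i k) (v - of_nat k))"
proof (induction a)
  case (Suc a)
  have "[1..<Suc (Suc a)] = [1..<Suc a] @ [Suc a]" by simp
  then show ?case using Suc by (simp add: word_weight_append algebra_simps del: upt_Suc)
qed simp

lemma word_weight_pair:
  "word_weight g (us @ x # y # ws) v = word_weight g us v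
     * (g x (v - of_nat (length us)) * g y (v - of_nat (length us) - 1))
     * word_weight g ws (v - of_nat (length us) - 2)"
  by (simp add: word_weight_append algebra_simps flip: one_add_one)

definition weight_equiv :: "('a \<Rightarrow> 'b::ring_1 \<Rightarrow> 'c::comm_monoid_mult) \<Rightarrow> 'a list \<Rightarrow> 'a list \<Rightarrow> bool" where
  "weight_equiv g xs ys \<longleftrightarrow> length xs = length ys \<and> (\<forall>v. word_weight g xs v = word_weight g ys v)"

lemma weight_equiv_refl [simp]: "weight_equiv g xs xs"
  by (simp add: weight_equiv_def)

lemma weight_equiv_sym: "weight_equiv g xs ys \<Longrightarrow> weight_equiv g ys xs"
  by (simp add: weight_equiv_def)

lemma weight_equiv_trans:
  "weight_equiv g xs ys \<Longrightarrow> weight_equiv g ys zs \<Longrightarrow> weight_equiv g xs zs"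
  by (simp add: weight_equiv_def)

lemma weight_equiv_append_cong:
  "weight_equiv g xs ys \<Longrightarrow> weight_equiv g (us @ xs @ ws) (us @ ys @ ws)"
  by (simp add: weight_equiv_def word_weight_append)

text \<open>The surplus outer letters on one side are moved inwards by \<open>shift\<close> and then
  absorbed by \<open>inner\<close>.\<close>
lemma weight_equiv_peel:
  assumes shift: "\<And>d w. d + length w = L \<Longrightarrow>
      weight_equiv g (replicate d x @ w @ replicate d y) (replicate d x' @ w @ replicate d y')"
    and inner: "\<And>k1 k2. length us + k1 = L + k2 \<Longrightarrow>
      weight_equiv g (replicate k1 x' @ us @ replicate k1 y') (replicate k2 x' @ vs @ replicate k2 y')"
    and lengths: "length us + length vs = 2 * L" "p + q' = p' + q" "p + q + length us = p' + q' + length vs"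
  shows "weight_equiv g (replicate p x @ us @ replicate q y) (replicate p' x @ vs @ replicate q' y)"
proof (cases "p' \<le> p")
  case True
  define d where "d = p - p'"
  have d: "p = p' + d" "q = d + q'" "d + length us = L" using True lengths by (auto simp: d_def)
  have "weight_equiv g (replicate d x @ us @ replicate d y) (replicate d x' @ us @ replicate d y')"
    using shift d(3) by simp
  moreover have "weight_equiv g (replicate d x' @ us @ replicate d y') vs"
    using inner[of d 0] d(3) by (simp add: add.commute)
  ultimately have "weight_equiv g (replicate d x @ us @ replicate d y) vs"
    by (rule weight_equiv_trans)
  moreover have "replicate p x @ us @ replicate q y
      = replicate p' x @ (replicate d x @ us @ replicate d y) @ replicate q' y"
    by (simp add: d replicate_add)
  ultimately show ?thesis by (metis weight_equiv_append_cong)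
next
  case False
  define d where "d = p' - p"
  have d: "p' = p + d" "q' = d + q" "d + length vs = L" using False lengths by (auto simp: d_def)
  have "weight_equiv g us (replicate d x' @ vs @ replicate d y')"
    using inner[of 0 d] lengths(1) d(3) by simp
  moreover have "weight_equiv g (replicate d x' @ vs @ replicate d y') (replicate d x @ vs @ replicate d y)"
    using shift d(3) weight_equiv_sym by blast
  ultimately have "weight_equiv g us (replicate d x @ vs @ replicate d y)"
    by (rule weight_equiv_trans)
  moreover have "replicate p' x @ vs @ replicate q' y
      = replicate p x @ (replicate d x @ vs @ replicate d y) @ replicate q y"
    by (simp add: d replicate_add)
  ultimately show ?thesis by (metis weight_equiv_append_cong)
qed

section \<open>Sorted lists and increasing tuples\<close>

lemma sorted_list_of_set_Un_less:
  fixes A B :: "'a::linorder set"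
  assumes "finite A" "finite B" "\<forall>a\<in>A. \<forall>b\<in>B. a < b"
  shows "sorted_list_of_set (A \<union> B) = sorted_list_of_set A @ sorted_list_of_set B"
proof -
  have "A \<inter> B = {}" using assms(3) by auto
  then have "card (A \<union> B) = card A + card B" using assms(1,2) by (simp add: card_Un_disjoint)
  then show ?thesis using assms
    by (subst sorted_list_of_set_unique[symmetric]) (auto simp: sorted_wrt_append)
qed

lemma sorted_list_of_set_split3:
  fixes X :: "'a::linorder set"
  assumes "finite X" "c \<le> d"
  shows "sorted_list_of_set X = sorted_list_of_set (X \<inter> {..<c}) @
           sorted_list_of_set (X \<inter> {c..d}) @ sorted_list_of_set (X \<inter> {d<..})"
proof -
  have "X = (X \<inter> {..<c}) \<union> ((X \<inter> {c..d}) \<union> (X \<inter> {d<..}))" by auto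
  also have "sorted_list_of_set \<dots> = sorted_list_of_set (X \<inter> {..<c}) @
      sorted_list_of_set ((X \<inter> {c..d}) \<union> (X \<inter> {d<..}))"
    by (rule sorted_list_of_set_Un_less) (use assms in auto)
  also have "sorted_list_of_set ((X \<inter> {c..d}) \<union> (X \<inter> {d<..})) =
      sorted_list_of_set (X \<inter> {c..d}) @ sorted_list_of_set (X \<inter> {d<..})"
    by (rule sorted_list_of_set_Un_less) (use assms in auto)
  finally show ?thesis .
qed

lemma sorted_list_of_set_Int_singleton:
  "sorted_list_of_set (X \<inter> {x}) = replicate (of_bool (x \<in> X)) x"
  by (cases "x \<in> X") (simp_all add: Int_insert_right)

lemma sorted_list_of_set_window:
  fixes f g :: nat
  assumes "Y \<subseteq> {f..g}" "f < g"
  shows "sorted_list_of_set Y = replicate (of_bool (f \<in> Y)) f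
           @ sorted_list_of_set (Y \<inter> {f<..<g}) @ replicate (of_bool (g \<in> Y)) g"
proof -
  have "Y = (Y \<inter> {f}) \<union> ((Y \<inter> {f<..<g}) \<union> (Y \<inter> {g}))"
    using assms(1) by (auto simp: le_less)
  also have "sorted_list_of_set \<dots> = sorted_list_of_set (Y \<inter> {f})
      @ sorted_list_of_set ((Y \<inter> {f<..<g}) \<union> (Y \<inter> {g}))"
    by (rule sorted_list_of_set_Un_less) (use assms(2) in auto)
  also have "sorted_list_of_set ((Y \<inter> {f<..<g}) \<union> (Y \<inter> {g}))
      = sorted_list_of_set (Y \<inter> {f<..<g}) @ sorted_list_of_set (Y \<inter> {g})"
    by (rule sorted_list_of_set_Un_less) auto
  finally show ?thesis by (simp add: sorted_list_of_set_Int_singleton)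
qed

lemma sorted_list_of_set_image_strict_mono_on:
  fixes f :: "'a::linorder \<Rightarrow> 'b::linorder"
  assumes "finite A" "strict_mono_on A f"
  shows "sorted_list_of_set (f ` A) = map f (sorted_list_of_set A)"
proof -
  have "sorted_wrt (<) (map f (sorted_list_of_set A))"
    unfolding sorted_wrt_map
    by (rule sorted_wrt_mono_rel[of _ "(<)"])
       (use assms in \<open>auto dest: strict_mono_onD\<close>)
  moreover have "card (f ` A) = card A"
    using card_image[OF strict_mono_on_imp_inj_on[OF assms(2)]] .
  ultimately show ?thesis using assms(1)
    by (subst sorted_list_of_set_unique[symmetric]) auto
qed

lemma sorted_list_of_set_image_tuple:
  assumes "strict_mono_on {1..a} i"
  shows "sorted_list_of_set (i ` {1..a}) = map i [1..<Suc a]"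
proof -
  have "{1..a} = {1..<Suc a}" by auto
  then show ?thesis using sorted_list_of_set_image_strict_mono_on[OF _ assms] by simp
qed

lemma sum_strict_mono_tuples:
  fixes A :: "nat set" and G :: "nat list \<Rightarrow> 'b::comm_monoid_add"
  assumes "finite A"
  shows "(\<Sum>i | i \<in> {1..a} \<rightarrow>\<^sub>E A \<and> strict_mono_on {1..a} i \<and> R (i ` {1..a}). G (map i [1..<Suc a]))
       = (\<Sum>X | X \<subseteq> A \<and> card X = a \<and> R X. G (sorted_list_of_set X))"
proof (rule sum.reindex_bij_witness[where j = "\<lambda>i. i ` {1..a}"
      and i = "\<lambda>X. restrict (\<lambda>k. sorted_list_of_set X ! (k - 1)) {1..a}"])
  fix i assume "i \<in> {i. i \<in> {1..a} \<rightarrow>\<^sub>E A \<and> strict_mono_on {1..a} i \<and> R (i ` {1..a})}"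
  then have i: "i \<in> {1..a} \<rightarrow>\<^sub>E A" "strict_mono_on {1..a} i" "R (i ` {1..a})" by auto
  note sorted_image = sorted_list_of_set_image_tuple[OF i(2)]
  show "restrict (\<lambda>k. sorted_list_of_set (i ` {1..a}) ! (k - 1)) {1..a} = i"
    unfolding sorted_image
  proof (rule extensionalityI[of _ "{1..a}"])
    show "i \<in> extensional {1..a}" using i(1) by (simp add: PiE_def)
  qed (auto simp del: upt_Suc)
  show "i ` {1..a} \<in> {X. X \<subseteq> A \<and> card X = a \<and> R X}"
    using i card_image[OF strict_mono_on_imp_inj_on[OF i(2)]] by auto
  show "G (sorted_list_of_set (i ` {1..a})) = G (map i [1..<Suc a])"
    by (simp only: sorted_image)
next
  fix X assume "X \<in> {X. X \<subseteq> A \<and> card X = a \<and> R X}"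
  then have X: "X \<subseteq> A" "card X = a" "R X" by auto
  define xs where "xs = sorted_list_of_set X"
  have xs: "sorted_wrt (<) xs" "length xs = a" "set xs = X"
    using X finite_subset[OF X(1) assms] by (auto simp: xs_def)
  define i where "i = restrict (\<lambda>k. xs ! (k - 1)) {1..a}"
  have image: "i ` {1..a} = X"
  proof -
    have "i ` {1..a} = (\<lambda>k. xs ! k) ` {..<a}"
      unfolding i_def by (force simp: image_iff intro: bexI[of _ "Suc _"])
    then show ?thesis using xs by (auto simp: set_conv_nth)
  qed
  have "strict_mono_on {1..a} i"
    by (auto simp: i_def monotone_on_def intro!: sorted_wrt_nth_less[OF xs(1)] simp: xs(2))
  then show "i \<in> {i. i \<in> {1..a} \<rightarrow>\<^sub>E A \<and> strict_mono_on {1..a} i \<and> R (i ` {1..a})}"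
    using image X by (auto simp: i_def)
  show "i ` {1..a} = X" by (fact image)
qed

lemma sum_increasing_tuples:
  fixes A :: "nat set" and g :: "nat \<Rightarrow> 'b::ring_1 \<Rightarrow> 'c::comm_semiring_1"
  assumes "finite A"
  shows "(\<Sum>i\<in>{i \<in> {1..a} \<rightarrow>\<^sub>E A. \<forall>k\<in>{1..a}. \<forall>l\<in>{1..a}. k < l \<longrightarrow> i k < i l}.
           \<Prod>k\<in>{1..a}. g (i k) (v - of_nat k))
       = (\<Sum>X | X \<subseteq> A \<and> card X = a. word_weight g (sorted_list_of_set X) (v - 1))"
proof -
  have "{i \<in> {1..a} \<rightarrow>\<^sub>E A. \<forall>k\<in>{1..a}. \<forall>l\<in>{1..a}. k < l \<longrightarrow> i k < i l}
      = {i. i \<in> {1..a} \<rightarrow>\<^sub>E A \<and> strict_mono_on {1..a} i \<and> True}"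
    by (auto simp: monotone_on_def)
  then have "(\<Sum>i\<in>{i \<in> {1..a} \<rightarrow>\<^sub>E A. \<forall>k\<in>{1..a}. \<forall>l\<in>{1..a}. k < l \<longrightarrow> i k < i l}.
           \<Prod>k\<in>{1..a}. g (i k) (v - of_nat k))
      = (\<Sum>i | i \<in> {1..a} \<rightarrow>\<^sub>E A \<and> strict_mono_on {1..a} i \<and> True. word_weight g (map i [1..<Suc a]) (v - 1))"
    by (simp only: word_weight_map_upt)
  also have "\<dots> = (\<Sum>X | X \<subseteq> A \<and> card X = a \<and> True. word_weight g (sorted_list_of_set X) (v - 1))"
    by (rule sum_strict_mono_tuples[OF assms])
  finally show ?thesis by simp
qed

lemma sum_subsets_split:
  assumes "finite A"
  shows "(\<Sum>X | X \<subseteq> A \<and> card X = a. h X)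
       = (\<Sum>X | X \<subseteq> A \<and> card X = a \<and> \<not> R X. h X) + (\<Sum>X | X \<subseteq> A \<and> card X = a \<and> R X. h X)"
proof -
  have "sum h {X. X \<subseteq> A \<and> card X = a}
      = sum h ({X. X \<subseteq> A \<and> card X = a} \<inter> {X. R X}) + sum h ({X. X \<subseteq> A \<and> card X = a} - {X. R X})"
    by (rule sum.Int_Diff) (simp add: assms)
  moreover have "{X. X \<subseteq> A \<and> card X = a} \<inter> {X. R X} = {X. X \<subseteq> A \<and> card X = a \<and> R X}"
    "{X. X \<subseteq> A \<and> card X = a} - {X. R X} = {X. X \<subseteq> A \<and> card X = a \<and> \<not> R X}"
    by auto
  ultimately show ?thesis by (simp only: add.commute)
qed

lemma card_image_between:
  fixes i :: "nat \<Rightarrow> 'a::linorder"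
  assumes "strict_mono_on {1..a} i" "k \<in> {1..a}" "l \<in> {1..a}"
  shows "card (i ` {1..a} \<inter> {i k<..<i l}) = l - k - 1"
proof -
  have "i ` {1..a} \<inter> {i k<..<i l} = i ` {k<..<l}"
    using assms(2,3) by (auto simp: strict_mono_on_less[OF assms(1)])
  moreover have "inj_on i {k<..<l}"
    by (rule inj_on_subset[OF strict_mono_on_imp_inj_on[OF assms(1)]]) (use assms in auto)
  ultimately show ?thesis by (simp add: card_image)
qed

section \<open>Violations\<close>

lemma atLeastAtMost_Suc_bar [simp]: "{Suc c..bar n (Suc c)} = {c<..<bar n c}"
  by auto

lemma atLeastAtMost_bar_eq:
  assumes "c \<le> n"
  shows "{c..bar n c} = insert c (insert (bar n c) {c<..<bar n c})"
  using assms by auto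

lemma card_window_Suc:
  assumes "c < n"
  shows "card (X \<inter> {c<..<bar n c}) =
    card (X \<inter> {Suc c<..<bar n (Suc c)}) + of_bool (Suc c \<in> X) + of_bool (bar n (Suc c) \<in> X)"
proof -
  have "X \<inter> {c<..<bar n c} = (X \<inter> {Suc c<..<bar n (Suc c)}) \<union> (X \<inter> {Suc c}) \<union> (X \<inter> {bar n (Suc c)})"
    using assms by auto
  moreover have "card \<dots> = card (X \<inter> {Suc c<..<bar n (Suc c)}) + card (X \<inter> {Suc c}) + card (X \<inter> {bar n (Suc c)})"
    using assms by (subst card_Un_disjoint; auto)+
  ultimately show ?thesis by (simp add: Int_insert_right)
qed

lemma card_window_le: "card (X \<inter> {c<..<bar n c}) \<le> 2 * (n - c)"
  using card_mono[of "{c<..<bar n c}" "X \<inter> {c<..<bar n c}"] by auto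


definition violated :: "nat \<Rightarrow> nat set \<Rightarrow> nat \<Rightarrow> bool" where
  "violated n X c \<longleftrightarrow> c \<in> {1..n} \<and> c \<in> X \<and> bar n c \<in> X \<and> n - c \<le> card (X \<inter> {c<..<bar n c})"

lemma admissible_iff_not_violated:
  assumes "strict_mono_on {1..a} i"
  shows "(\<forall>k\<in>{1..a}. \<forall>l\<in>{1..a}. \<forall>c\<in>{1..n}. i k = c \<and> i l = bar n c \<longrightarrow> int n + int k - int l \<ge> int c)
     \<longleftrightarrow> \<not> (\<exists>c. violated n (i ` {1..a}) c)"
proof -
  have key: "int n + int k - int l \<ge> int c \<longleftrightarrow> \<not> n - c \<le> card (i ` {1..a} \<inter> {c<..<bar n c})"
    if "k \<in> {1..a}" "l \<in> {1..a}" "c \<in> {1..n}" "i k = c" "i l = bar n c" for k l c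
  proof -
    have "k < l" using that strict_mono_on_less[OF assms, of k l] by auto
    moreover have "card (i ` {1..a} \<inter> {c<..<bar n c}) = l - k - 1"
      using card_image_between[OF assms that(1,2)] that(4,5) by simp
    ultimately show ?thesis using that(3) by auto
  qed
  show ?thesis
  proof
    assume admissible: "\<forall>k\<in>{1..a}. \<forall>l\<in>{1..a}. \<forall>c\<in>{1..n}. i k = c \<and> i l = bar n c \<longrightarrow> int n + int k - int l \<ge> int c"
    show "\<not> (\<exists>c. violated n (i ` {1..a}) c)"
    proof
      assume "\<exists>c. violated n (i ` {1..a}) c"
      then obtain c where c: "c \<in> {1..n}" "c \<in> i ` {1..a}" "bar n c \<in> i ` {1..a}"
          and excess: "n - c \<le> card (i ` {1..a} \<inter> {c<..<bar n c})"
        unfolding violated_def by blast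
      then obtain k l where kl: "k \<in> {1..a}" "l \<in> {1..a}" "i k = c" "i l = bar n c"
        by (metis imageE)
      then have "int n + int k - int l \<ge> int c" using admissible c(1) by blast
      then show False using key[OF kl(1,2) c(1) kl(3,4)] excess by simp
    qed
  next
    assume not_violated: "\<not> (\<exists>c. violated n (i ` {1..a}) c)"
    show "\<forall>k\<in>{1..a}. \<forall>l\<in>{1..a}. \<forall>c\<in>{1..n}. i k = c \<and> i l = bar n c \<longrightarrow> int n + int k - int l \<ge> int c"
    proof (intro ballI impI)
      fix k l c assume kl: "k \<in> {1..a}" "l \<in> {1..a}" "c \<in> {1..n}" "i k = c \<and> i l = bar n c"
      then have "c \<in> i ` {1..a}" "bar n c \<in> i ` {1..a}" by force+
      then have "\<not> n - c \<le> card (i ` {1..a} \<inter> {c<..<bar n c})"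
        using not_violated kl(3) unfolding violated_def by blast
      then show "int n + int k - int l \<ge> int c" using key kl by blast
    qed
  qed
qed

lemma admissible_eq:
  "admissible n a = {i. i \<in> {1..a} \<rightarrow>\<^sub>E {1..2 * n} \<and> strict_mono_on {1..a} i \<and> \<not> (\<exists>c. violated n (i ` {1..a}) c)}"
proof (intro set_eqI)
  fix i :: "nat \<Rightarrow> nat"
  have "strict_mono_on {1..a} i \<longleftrightarrow> (\<forall>k\<in>{1..a}. \<forall>l\<in>{1..a}. k < l \<longrightarrow> i k < i l)"
    by (simp add: monotone_on_def)
  then show "i \<in> admissible n a \<longleftrightarrow>
      i \<in> {i. i \<in> {1..a} \<rightarrow>\<^sub>E {1..2 * n} \<and> strict_mono_on {1..a} i \<and> \<not> (\<exists>c. violated n (i ` {1..a}) c)}"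
    using admissible_iff_not_violated[of a i n] unfolding admissible_def by blast
qed

lemma T1_eq_sum_not_violated:
  "T1 n Q a u = (\<Sum>X | X \<subseteq> {1..2 * n} \<and> card X = a \<and> \<not> (\<exists>c. violated n X c).
      word_weight (zJ n Q) (sorted_list_of_set X) (u + of_nat a / 2 - 1))"
proof -
  have "(\<Prod>k\<in>{1..a}. zJ n Q (i k) (u - 1 / 2 + (of_nat a - 2 * of_nat k + 1) / 2))
      = word_weight (zJ n Q) (map i [1..<Suc a]) (u + of_nat a / 2 - 1)" for i
  proof -
    have "u - 1 / 2 + (of_nat a - 2 * of_nat k + 1) / 2 = u + of_nat a / 2 - of_nat k" for k :: nat
      by (simp add: field_simps)
    then show ?thesis by (simp only: word_weight_map_upt)
  qed
  then have "T1 n Q a u = (\<Sum>i\<in>admissible n a. word_weight (zJ n Q) (map i [1..<Suc a]) (u + of_nat a / 2 - 1))"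
    by (simp add: T1_def Tsum_def)
  also have "\<dots> = (\<Sum>X | X \<subseteq> {1..2 * n} \<and> card X = a \<and> \<not> (\<exists>c. violated n X c).
      word_weight (zJ n Q) (sorted_list_of_set X) (u + of_nat a / 2 - 1))"
    unfolding admissible_eq by (rule sum_strict_mono_tuples) simp
  finally show ?thesis .
qed

definition tight :: "nat \<Rightarrow> nat set \<Rightarrow> nat \<Rightarrow> bool" where
  "tight n X c \<longleftrightarrow> c \<in> {1..n} \<and> c \<in> X \<and> bar n c \<in> X \<and> card (X \<inter> {c<..<bar n c}) = n - c"

definition vacant :: "nat \<Rightarrow> nat set \<Rightarrow> nat \<Rightarrow> bool" where
  "vacant n X c \<longleftrightarrow> c \<in> {1..n} \<and> c \<notin> X \<and> bar n c \<notin> X \<and> card (X \<inter> {c<..<bar n c}) = n - c"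

lemma tight_range: "tight n X c \<Longrightarrow> c \<in> {1..n}"
  by (simp add: tight_def)

lemma vacant_range: "vacant n X c \<Longrightarrow> c \<in> {1..n}"
  by (simp add: vacant_def)

text \<open>Going inwards, the excess of \<open>card (X \<inter> {d<..<bar n d})\<close> over \<open>n - d\<close> drops by
  at most one per step and vanishes at \<open>d = n\<close>; the step after its last positive value is
  tight.\<close>
lemma tight_above:
  assumes "c < n" and excess: "n - c < card (X \<inter> {c<..<bar n c})"
  shows "\<exists>d>c. tight n X d"
proof -
  define S where "S = {d \<in> {c..n}. n - d < card (X \<inter> {d<..<bar n d})}"
  have "c \<in> S" "finite S" using assms by (auto simp: S_def)
  define d where "d = Max S"
  have "d \<in> S" "c \<le> d"
    using Max_in[OF \<open>finite S\<close>] Max_ge[OF \<open>finite S\<close> \<open>c \<in> S\<close>] \<open>c \<in> S\<close> by (auto simp: d_def)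
  moreover have "{n<..<bar n n} = {}" by auto
  then have "d \<noteq> n" using \<open>d \<in> S\<close> by (auto simp: S_def)
  ultimately have "d < n" and excess_d: "n - d < card (X \<inter> {d<..<bar n d})" by (auto simp: S_def)
  have "Suc d \<notin> S" using Max_ge[OF \<open>finite S\<close>, of "Suc d"] by (auto simp: d_def)
  then have "card (X \<inter> {Suc d<..<bar n (Suc d)}) \<le> n - d - 1"
    using \<open>c \<le> d\<close> \<open>d < n\<close> by (auto simp: S_def)
  moreover have "P \<and> R \<and> e = m - 1" if "k = e + of_bool P + of_bool R" "m < k" "e \<le> m - 1" "0 < m"
    for P R and k e m :: nat
    using that by (cases P; cases R) auto
  ultimately have "Suc d \<in> X" "bar n (Suc d) \<in> X" "card (X \<inter> {Suc d<..<bar n (Suc d)}) = n - d - 1"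
    using card_window_Suc[OF \<open>d < n\<close>, of X] excess_d \<open>d < n\<close> by (metis zero_less_diff)+
  then have "tight n X (Suc d)" using \<open>d < n\<close> by (simp add: tight_def)
  then show ?thesis using \<open>c \<le> d\<close> by (auto intro: exI[of _ "Suc d"])
qed

lemma ex_tight_iff_ex_violated: "(\<exists>c. tight n X c) \<longleftrightarrow> (\<exists>c. violated n X c)"
proof
  assume "\<exists>c. violated n X c"
  then obtain c where c: "violated n X c" by blast
  show "\<exists>c. tight n X c"
  proof (cases "card (X \<inter> {c<..<bar n c}) = n - c")
    case True
    then show ?thesis using c by (auto simp: violated_def tight_def)
  next
    case False
    moreover have "c \<noteq> n" using False by auto
    ultimately show ?thesis using c tight_above[of c n X] by (auto simp: violated_def)
  qed
qed (auto simp: violated_def tight_def)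

lemma vacant_iff_tight_complement:
  assumes "M \<subseteq> {1..2 * n}"
  shows "vacant n M c \<longleftrightarrow> tight n ({1..2 * n} - M) c"
proof (cases "c \<in> {1..n}")
  case True
  let ?k = "card (M \<inter> {c<..<bar n c})"
  have "({1..2 * n} - M) \<inter> {c<..<bar n c} = {c<..<bar n c} - M" using True by auto
  then have "card (({1..2 * n} - M) \<inter> {c<..<bar n c}) = 2 * (n - c) - ?k"
    by (simp add: card_Diff_subset_Int Int_commute)
  moreover have "2 * (n - c) - ?k = n - c \<longleftrightarrow> ?k = n - c"
    using card_window_le[of M c n] by linarith
  moreover have "c \<in> {1..2 * n} - M \<longleftrightarrow> c \<notin> M" "bar n c \<in> {1..2 * n} - M \<longleftrightarrow> bar n c \<notin> M"
    using True by auto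
  ultimately show ?thesis unfolding vacant_def tight_def by presburger
next
  case False
  then show ?thesis unfolding vacant_def tight_def by blast
qed

lemma ex_vacant:
  assumes "M \<subseteq> {1..2 * n}" "card M < n"
  shows "\<exists>c. vacant n M c"
proof -
  have "{0<..<bar n 0} = {1..2 * n}" by auto
  then have "card (({1..2 * n} - M) \<inter> {0<..<bar n 0}) = 2 * n - card M"
    using assms(1) by (simp add: card_Diff_subset finite_subset Int_absorb2)
  then have "\<exists>c>0. tight n ({1..2 * n} - M) c"
    using tight_above[of 0 n "{1..2 * n} - M"] assms(2) by simp
  then obtain c where "tight n ({1..2 * n} - M) c" by blast
  then show ?thesis using vacant_iff_tight_complement[OF assms(1)] by blast
qed

section \<open>Reflection of the window around a letter\<close>

definition dual :: "nat \<Rightarrow> nat \<Rightarrow> nat set \<Rightarrow> nat set" where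
  "dual n c Y = {x. c \<le> x \<and> x \<le> bar n c \<and> bar n x \<notin> Y}"

definition reflect :: "nat \<Rightarrow> nat \<Rightarrow> nat set \<Rightarrow> nat set" where
  "reflect n c X = (X - {c..bar n c}) \<union> dual n c X"

lemma dual_subset: "dual n c Y \<subseteq> {c..bar n c}"
  by (auto simp: dual_def)

lemma finite_dual [simp]: "finite (dual n c Y)"
  using finite_subset[OF dual_subset] by blast

lemma dual_eq_image: "dual n c Y = bar n ` ({c..bar n c} - Y)"
proof (intro set_eqI iffI)
  fix x assume "x \<in> dual n c Y"
  then show "x \<in> bar n ` ({c..bar n c} - Y)"
    by (intro image_eqI[of _ _ "bar n x"]) (auto simp: dual_def)
qed (auto simp: dual_def)

lemma card_dual: "card (dual n c Y) = card {c..bar n c} - card (Y \<inter> {c..bar n c})"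
proof -
  have "inj_on (bar n) {c..bar n c}" by (auto intro!: inj_onI)
  then have "card (dual n c Y) = card ({c..bar n c} - Y)"
    unfolding dual_eq_image by (auto intro: card_image inj_on_subset)
  then show ?thesis by (simp add: card_Diff_subset_Int Int_commute)
qed

lemma dual_Int_window: "dual n c (Y \<inter> {c..bar n c}) = dual n c Y"
  by (auto simp: dual_def)

lemma dual_dual: "dual n c (dual n c Y) = Y \<inter> {c..bar n c}"
  by (auto simp: dual_def)

lemma reflect_reflect: "reflect n c (reflect n c X) = X"
proof -
  have "reflect n c X \<inter> {c..bar n c} = dual n c X"
    using dual_subset by (auto simp: reflect_def)
  then have "dual n c (reflect n c X) = X \<inter> {c..bar n c}"
    by (metis dual_Int_window dual_dual)
  then show ?thesis using dual_subset[of n c X] by (auto simp: reflect_def)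
qed

lemma reflect_subset:
  assumes "X \<subseteq> {1..2 * n}" "1 \<le> c"
  shows "reflect n c X \<subseteq> {1..2 * n}"
  using assms by (auto simp: reflect_def dual_def)

lemma card_reflect:
  assumes "finite X"
  shows "card (reflect n c X) + 2 * card (X \<inter> {c..bar n c}) = card X + card {c..bar n c}"
proof -
  define k where "k = card (X \<inter> {c..bar n c})"
  have "card (reflect n c X) = card (X - {c..bar n c}) + card (dual n c X)"
    unfolding reflect_def using assms dual_subset[of n c X] by (subst card_Un_disjoint) auto
  also have "\<dots> = (card X - k) + (card {c..bar n c} - k)"
    using assms by (simp add: card_Diff_subset_Int card_dual k_def)
  finally have "card (reflect n c X) = (card X - k) + (card {c..bar n c} - k)" .
  moreover have "k \<le> card {c..bar n c}"
    unfolding k_def by (rule card_mono) auto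
  moreover have "k \<le> card X"
    unfolding k_def using assms by (rule card_mono) auto
  ultimately show ?thesis unfolding k_def[symmetric] by linarith
qed

lemma tight_reflect_iff:
  assumes "c \<le> d"
  shows "tight n (reflect n c X) d \<longleftrightarrow> vacant n X d"
proof (cases "d \<in> {1..n}")
  case True
  let ?X' = "reflect n c X" and ?k = "card (X \<inter> {d<..<bar n d})"
  have members: "d \<in> ?X' \<longleftrightarrow> bar n d \<notin> X" "bar n d \<in> ?X' \<longleftrightarrow> d \<notin> X"
    using assms True by (auto simp: reflect_def dual_def)
  have "?X' \<inter> {d<..<bar n d} = dual n (Suc d) X"
    using assms by (auto simp: reflect_def dual_def)
  then have inner: "card (?X' \<inter> {d<..<bar n d}) = 2 * (n - d) - ?k"
    using card_dual[of n "Suc d" X] by (simp only: atLeastAtMost_Suc_bar) simp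
  have "2 * (n - d) - ?k = n - d \<longleftrightarrow> ?k = n - d"
    using card_window_le[of X d n] by linarith
  then show ?thesis using True members inner by (auto simp: tight_def vacant_def)
qed (auto simp: tight_def vacant_def)

lemma vacant_reflect_iff:
  assumes "c \<le> d"
  shows "vacant n (reflect n c X) d \<longleftrightarrow> tight n X d"
  using tight_reflect_iff[OF assms, of n "reflect n c X"] by (simp add: reflect_reflect)

lemma card_window_tight:
  assumes "tight n X c"
  shows "card (X \<inter> {c..bar n c}) = card (X \<inter> {c<..<bar n c}) + 2"
proof -
  have "c \<le> n" using tight_range[OF assms] by simp
  then show ?thesis
    using assms unfolding atLeastAtMost_bar_eq[OF \<open>c \<le> n\<close>] by (simp add: tight_def Int_insert_right)
qed

lemma card_window_vacant:
  assumes "vacant n X c"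
  shows "card (X \<inter> {c..bar n c}) = card (X \<inter> {c<..<bar n c})"
proof -
  have "c \<le> n" using vacant_range[OF assms] by simp
  then show ?thesis
    using assms unfolding atLeastAtMost_bar_eq[OF \<open>c \<le> n\<close>] by (simp add: vacant_def Int_insert_right)
qed

lemma card_reflect_tight:
  assumes "finite X" "tight n X c"
  shows "card (reflect n c X) + 2 = card X"
proof -
  have "c \<le> n" using assms(2) by (simp add: tight_def)
  then have "card {c..bar n c} = 2 * (n - c) + 2" by simp
  then show ?thesis
    using card_reflect[OF assms(1), of n c] card_window_tight[OF assms(2)] assms(2)
    unfolding tight_def by linarith
qed

lemma card_reflect_vacant:
  assumes "finite X" "vacant n X c"
  shows "card (reflect n c X) = card X + 2"
proof -
  have "c \<le> n" using assms(2) by (simp add: vacant_def)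
  then have "card {c..bar n c} = 2 * (n - c) + 2" by simp
  then show ?thesis
    using card_reflect[OF assms(1), of n c] card_window_vacant[OF assms(2)] assms(2)
    unfolding vacant_def by linarith
qed

lemma finite_tight: "finite {c. tight n X c}"
  by (rule finite_subset[of _ "{1..n}"]) (auto dest: tight_range)

lemma finite_vacant: "finite {c. vacant n X c}"
  by (rule finite_subset[of _ "{1..n}"]) (auto dest: vacant_range)

lemma reflect_Max_tight:
  assumes "X \<subseteq> {1..2 * n}" "\<exists>c. tight n X c"
  defines "c \<equiv> Max {c. tight n X c}"
  shows "reflect n c X \<subseteq> {1..2 * n}" "card (reflect n c X) + 2 = card X"
    "Max {d. vacant n (reflect n c X) d} = c"
proof -
  have c: "tight n X c" "\<forall>d. tight n X d \<longrightarrow> d \<le> c"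
    using assms(2) Max_in[OF finite_tight] Max_ge[OF finite_tight] unfolding c_def by auto
  show "reflect n c X \<subseteq> {1..2 * n}"
    using reflect_subset[OF assms(1)] tight_range[OF c(1)] by simp
  show "card (reflect n c X) + 2 = card X"
    using card_reflect_tight[OF finite_subset[OF assms(1) finite_atLeastAtMost] c(1)] .
  show "Max {d. vacant n (reflect n c X) d} = c"
  proof (rule Max_eqI[OF finite_vacant])
    show "c \<in> {d. vacant n (reflect n c X) d}" using c(1) by (simp add: vacant_reflect_iff)
    show "d \<le> c" if "d \<in> {d. vacant n (reflect n c X) d}" for d
      using that c(2) vacant_reflect_iff[of c d n X] by (cases "c \<le> d") auto
  qed
qed

lemma reflect_Max_vacant:
  assumes "M \<subseteq> {1..2 * n}" "card M < n"
  defines "c \<equiv> Max {c. vacant n M c}"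
  shows "reflect n c M \<subseteq> {1..2 * n}" "card (reflect n c M) = card M + 2"
    "tight n (reflect n c M) c" "Max {d. tight n (reflect n c M) d} = c"
proof -
  have c: "vacant n M c" "\<forall>d. vacant n M d \<longrightarrow> d \<le> c"
    using ex_vacant[OF assms(1,2)] Max_in[OF finite_vacant] Max_ge[OF finite_vacant] unfolding c_def by auto
  show "reflect n c M \<subseteq> {1..2 * n}"
    using reflect_subset[OF assms(1)] vacant_range[OF c(1)] by simp
  show "card (reflect n c M) = card M + 2"
    using card_reflect_vacant[OF finite_subset[OF assms(1) finite_atLeastAtMost] c(1)] .
  show "tight n (reflect n c M) c" using c(1) by (simp add: tight_reflect_iff)
  show "Max {d. tight n (reflect n c M) d} = c"
  proof (rule Max_eqI[OF finite_tight])
    show "c \<in> {d. tight n (reflect n c M) d}" using c(1) by (simp add: tight_reflect_iff)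
    show "d \<le> c" if "d \<in> {d. tight n (reflect n c M) d}" for d
      using that c(2) tight_reflect_iff[of c d n M] by (cases "c \<le> d") auto
  qed
qed

lemma bij_betw_reflect_Max_tight:
  assumes "a \<le> n"
  shows "bij_betw (\<lambda>X. reflect n (Max {c. tight n X c}) X)
    {X. X \<subseteq> {1..2 * n} \<and> card X = a \<and> (\<exists>c. tight n X c)} {M. M \<subseteq> {1..2 * n} \<and> card M + 2 = a}"
proof (rule bij_betw_byWitness[where f' = "\<lambda>M. reflect n (Max {c. vacant n M c}) M"])
  show "\<forall>X\<in>{X. X \<subseteq> {1..2 * n} \<and> card X = a \<and> (\<exists>c. tight n X c)}.
      reflect n (Max {c. vacant n (reflect n (Max {c. tight n X c}) X) c}) (reflect n (Max {c. tight n X c}) X) = X"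
    using reflect_Max_tight(3) by (simp add: reflect_reflect)
  show "\<forall>M\<in>{M. M \<subseteq> {1..2 * n} \<and> card M + 2 = a}.
      reflect n (Max {c. tight n (reflect n (Max {c. vacant n M c}) M) c}) (reflect n (Max {c. vacant n M c}) M) = M"
    using reflect_Max_vacant(4) assms by (simp add: reflect_reflect)
  show "(\<lambda>X. reflect n (Max {c. tight n X c}) X) ` {X. X \<subseteq> {1..2 * n} \<and> card X = a \<and> (\<exists>c. tight n X c)}
      \<subseteq> {M. M \<subseteq> {1..2 * n} \<and> card M + 2 = a}"
  proof clarify
    fix X c assume "X \<subseteq> {1..2 * n}" "tight n X c"
    then show "reflect n (Max {c. tight n X c}) X \<subseteq> {1..2 * n} \<and>
        card (reflect n (Max {c. tight n X c}) X) + 2 = card X"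
      using reflect_Max_tight(1,2)[of X n] by blast
  qed
  show "(\<lambda>M. reflect n (Max {c. vacant n M c}) M) ` {M. M \<subseteq> {1..2 * n} \<and> card M + 2 = a}
      \<subseteq> {X. X \<subseteq> {1..2 * n} \<and> card X = a \<and> (\<exists>c. tight n X c)}"
  proof clarify
    fix M assume M: "M \<subseteq> {1..2 * n}" "a = card M + 2"
    then have "card M < n" using assms by simp
    then show "reflect n (Max {c. vacant n M c}) M \<subseteq> {1..2 * n} \<and>
        card (reflect n (Max {c. vacant n M c}) M) = card M + 2 \<and>
        (\<exists>c. tight n (reflect n (Max {c. vacant n M c}) M) c)"
      using reflect_Max_vacant(1-3)[OF M(1)] by blast
  qed
qed

section \<open>Exchange relations between the letters\<close>

lemma YY_nonzero:
  assumes "\<forall>b\<in>{1..n}. \<forall>v. Q b v \<noteq> 0" "a \<le> n"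
  shows "YY n Q a t \<noteq> 0"
  using assms by (auto simp: YY_def)

lemma zJ_pair_shift:
  assumes Qnz: "\<forall>b\<in>{1..n}. \<forall>v. Q b v \<noteq> 0" and f: "1 \<le> f" "f < n"
  shows "zJ n Q f t * zJ n Q (bar n f) (t - (of_nat n - of_nat f + 1))
       = zJ n Q (Suc f) t * zJ n Q (bar n (Suc f)) (t - (of_nat n - of_nat f + 1))"
proof -
  define s where "s = t - (of_nat n - of_nat f + 1 :: complex)"
  define A where "A = YY n Q f (t + of_nat f / 2)"
  define B where "B = YY n Q (f - 1) (t + (of_nat f + 1) / 2)"
  define C where "C = YY n Q f (t + of_nat f / 2 + 1)"
  define D where "D = YY n Q (f + 1) (t + (of_nat f + 1) / 2)"
  have nonzero: "B \<noteq> 0" "C \<noteq> 0" "D \<noteq> 0"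
    unfolding B_def C_def D_def using YY_nonzero[OF Qnz] f by auto
  have z_f: "zJ n Q f t = A / B" using f by (simp add: zJ_def zu_def A_def B_def)
  have z_bar_f: "zJ n Q (bar n f) s = B / C"
  proof -
    have "s + (2 * of_nat n - of_nat f + 3) / 2 = t + (of_nat f + 1) / 2"
      "s + (2 * of_nat n - of_nat f + 4) / 2 = t + of_nat f / 2 + 1"
      unfolding s_def by (simp_all add: field_simps)
    moreover have "\<not> bar n f \<le> n" "bar n (bar n f) = f" using f by auto
    ultimately show ?thesis unfolding zJ_def zb_def B_def C_def by simp
  qed
  have z_Suc_f: "zJ n Q (Suc f) t = D / C"
  proof -
    have "of_nat (f + 1) / 2 = (of_nat f + 1 :: complex) / 2"
      "t + (of_nat (f + 1) + 1) / 2 = t + of_nat f / 2 + 1"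
      by (simp_all add: field_simps)
    then have "zu n Q (f + 1) t = D / C"
      unfolding zu_def C_def D_def by (simp only: diff_add_inverse2)
    then show ?thesis using f by (simp add: zJ_def)
  qed
  have z_bar_Suc_f: "zJ n Q (bar n (Suc f)) s = A / D"
  proof -
    have "s + (2 * of_nat n - of_nat (f + 1) + 3) / 2 = t + of_nat f / 2"
      "s + (2 * of_nat n - of_nat (f + 1) + 4) / 2 = t + (of_nat f + 1) / 2"
      unfolding s_def by (simp_all add: field_simps)
    then have "zb n Q (f + 1) s = A / D" unfolding zb_def A_def D_def by simp
    moreover have "\<not> bar n (Suc f) \<le> n" "bar n (bar n (Suc f)) = f + 1" using f by auto
    ultimately show ?thesis by (simp add: zJ_def)
  qed
  \<comment> \<open>both sides equal \<open>A / C\<close>\<close>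
  show ?thesis
    unfolding s_def[symmetric] z_f z_bar_f z_Suc_f z_bar_Suc_f using nonzero by (simp add: field_simps)
qed

lemma xmid_mult_xmid:
  assumes Qnz: "\<forall>b\<in>{1..n}. \<forall>v. Q b v \<noteq> 0" and "1 \<le> n"
  shows "xmid n Q t * xmid n Q (t - 1) = zJ n Q n t * zJ n Q (Suc n) (t - 1)"
proof -
  define q where "q r = Q n (t + of_nat n / 2 + r)" for r
  define P where "P = YY n Q (n - 1) (t + (of_nat n + 1) / 2)"
  have nonzero: "q r \<noteq> 0" "P \<noteq> 0" for r
    unfolding P_def q_def using Qnz assms YY_nonzero[OF Qnz] by auto
  have xmid: "xmid n Q t = q 0 * q 2 / (q 1)\<^sup>2" "xmid n Q (t - 1) = q (-1) * q 1 / (q 0)\<^sup>2"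
    unfolding xmid_def q_def by (simp_all add: field_simps)
  have z_n: "zJ n Q n t = (q (-1) / q 1) / P"
  proof -
    have "YY n Q n (t + of_nat n / 2) = q (-1) / q 1"
      unfolding YY_def dd_def q_def using assms by (simp add: field_simps)
    then show ?thesis by (simp add: zJ_def zu_def P_def)
  qed
  have z_Suc_n: "zJ n Q (Suc n) (t - 1) = P / (q 0 / q 2)"
  proof -
    have "t - 1 + (2 * of_nat n - of_nat n + 3) / 2 = t + (of_nat n + 1) / 2"
      by (simp add: field_simps)
    moreover have "YY n Q n (t - 1 + (2 * of_nat n - of_nat n + 4) / 2) = q 0 / q 2"
      unfolding YY_def dd_def q_def using assms by (simp add: field_simps)
    ultimately have "zb n Q n (t - 1) = P / (q 0 / q 2)"
      unfolding zb_def P_def by (simp only:)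
    then show ?thesis by (simp add: zJ_def)
  qed
  show ?thesis
    unfolding xmid z_n z_Suc_n using nonzero by (simp add: field_simps power2_eq_square)
qed

section \<open>The exchange identity for words\<close>

text \<open>Up to sign, \<open>mid_word n M\<close> carries the weight of the tuples through both x_(n+1)
  and x_(n+2).\<close>
definition mid_word :: "nat \<Rightarrow> nat set \<Rightarrow> nat list" where
  "mid_word n Z = sorted_list_of_set {x \<in> Z. x \<le> n} @ [n, Suc n] @ sorted_list_of_set {x \<in> Z. n < x}"

lemma length_mid_word: "finite Z \<Longrightarrow> length (mid_word n Z) = card Z + 2"
proof -
  assume "finite Z"
  moreover have "Z = {x \<in> Z. x \<le> n} \<union> {x \<in> Z. n < x}" by auto
  ultimately have "card Z = card {x \<in> Z. x \<le> n} + card {x \<in> Z. n < x}"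
    by (metis (no_types, lifting) card_Un_disjoint disjoint_iff finite_Un mem_Collect_eq not_le)
  then show ?thesis by (simp add: mid_word_def)
qed

lemma mid_word_dual_Suc:
  assumes "f < n"
  shows "mid_word n (dual n f Y) = replicate (of_bool (bar n f \<notin> Y)) f
           @ mid_word n (dual n (Suc f) Y) @ replicate (of_bool (f \<notin> Y)) (bar n f)"
proof -
  let ?D = "dual n (Suc f) Y"
  have members: "f \<in> dual n f Y \<longleftrightarrow> bar n f \<notin> Y" "bar n f \<in> dual n f Y \<longleftrightarrow> f \<notin> Y"
    using assms by (auto simp: dual_def)
  have "{x \<in> dual n f Y. x \<le> n} = (dual n f Y \<inter> {f}) \<union> {x \<in> ?D. x \<le> n}"
    using assms by (auto simp: dual_def)
  also have "sorted_list_of_set \<dots> = sorted_list_of_set (dual n f Y \<inter> {f}) @ sorted_list_of_set {x \<in> ?D. x \<le> n}"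
    by (rule sorted_list_of_set_Un_less) (auto simp: dual_def)
  finally have low: "sorted_list_of_set {x \<in> dual n f Y. x \<le> n}
      = replicate (of_bool (bar n f \<notin> Y)) f @ sorted_list_of_set {x \<in> ?D. x \<le> n}"
    using members by (simp add: sorted_list_of_set_Int_singleton)
  have "{x \<in> dual n f Y. n < x} = {x \<in> ?D. n < x} \<union> (dual n f Y \<inter> {bar n f})"
    using assms by (auto simp: dual_def)
  also have "sorted_list_of_set \<dots> = sorted_list_of_set {x \<in> ?D. n < x} @ sorted_list_of_set (dual n f Y \<inter> {bar n f})"
    by (rule sorted_list_of_set_Un_less) (auto simp: dual_def)
  finally have high: "sorted_list_of_set {x \<in> dual n f Y. n < x}
      = sorted_list_of_set {x \<in> ?D. n < x} @ replicate (of_bool (f \<notin> Y)) (bar n f)"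
    using members by (simp add: sorted_list_of_set_Int_singleton)
  show ?thesis unfolding mid_word_def low high by simp
qed

lemma mid_word_dual_base:
  assumes "Y \<subseteq> {n, Suc n}" "card Y + k1 = 2 + k2"
  shows "replicate k1 n @ sorted_list_of_set Y @ replicate k1 (Suc n)
       = replicate k2 n @ mid_word n (dual n n Y) @ replicate k2 (Suc n)"
proof -
  have "{x \<in> dual n n Y. x \<le> n} = dual n n Y \<inter> {n}" "{x \<in> dual n n Y. n < x} = dual n n Y \<inter> {Suc n}"
    by (auto simp: dual_def)
  moreover have "n \<in> dual n n Y \<longleftrightarrow> Suc n \<notin> Y" "Suc n \<in> dual n n Y \<longleftrightarrow> n \<notin> Y"
    by (auto simp: dual_def)
  ultimately have mid: "mid_word n (dual n n Y) = replicate (of_bool (Suc n \<notin> Y)) n @ [n, Suc n]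
      @ replicate (of_bool (n \<notin> Y)) (Suc n)"
    by (simp add: mid_word_def sorted_list_of_set_Int_singleton)
  consider "Y = {}" | "Y = {n}" | "Y = {Suc n}" | "Y = {n, Suc n}" using assms(1) by blast
  then show ?thesis
    using assms(2) unfolding mid by cases (auto simp: replicate_app_Cons_same numeral_2_eq_2)
qed

lemma weight_equiv_replicate_shift:
  assumes Qnz: "\<forall>b\<in>{1..n}. \<forall>v. Q b v \<noteq> 0" and f: "1 \<le> f" "f < n"
    and len: "k + length w = n - f + 1"
  shows "weight_equiv (zJ n Q) (replicate k f @ w @ replicate k (bar n f))
           (replicate k (Suc f) @ w @ replicate k (bar n (Suc f)))"
proof -
  have shift: "v - of_nat k - of_nat (length w) - of_nat i = (v - of_nat i) - (of_nat n - of_nat f + 1)"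
    for v :: complex and i
  proof -
    have "of_nat k + of_nat (length w) = (of_nat (n - f + 1) :: complex)"
      using len by (metis of_nat_add)
    then show ?thesis using f by (simp add: of_nat_diff algebra_simps)
  qed
  have weight: "word_weight (zJ n Q) (replicate k x @ w @ replicate k y) v = word_weight (zJ n Q) w (v - of_nat k)
      * (\<Prod>i<k. zJ n Q x (v - of_nat i) * zJ n Q y ((v - of_nat i) - (of_nat n - of_nat f + 1)))" for x y v
    by (simp add: word_weight_append word_weight_replicate prod.distrib shift)
  show ?thesis
    unfolding weight_equiv_def weight using zJ_pair_shift[OF Qnz f] by simp
qed

lemma weight_equiv_dual:
  assumes Qnz: "\<forall>b\<in>{1..n}. \<forall>v. Q b v \<noteq> 0"
    and "1 \<le> f" "f \<le> n" "Y \<subseteq> {f..bar n f}" "card Y + k1 = n - f + 2 + k2"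
  shows "weight_equiv (zJ n Q) (replicate k1 f @ sorted_list_of_set Y @ replicate k1 (bar n f))
           (replicate k2 f @ mid_word n (dual n f Y) @ replicate k2 (bar n f))"
  using assms(2-)
proof (induction "n - f" arbitrary: f k1 k2 Y)
  case 0
  then have "f = n" "Y \<subseteq> {n, Suc n}" by auto
  then show ?case using mid_word_dual_base[of Y n k1 k2] 0 by simp
next
  case (Suc m)
  then have f: "1 \<le> f" "f < n" by auto
  define g where "g = bar n f"
  define Y0 where "Y0 = Y \<inter> {f<..<g}"
  define \<alpha> :: nat where "\<alpha> = of_bool (f \<in> Y)"
  define \<beta> :: nat where "\<beta> = of_bool (g \<in> Y)"
  define Z0 where "Z0 = mid_word n (dual n (Suc f) Y0)"
  have "\<alpha> \<le> 1" "\<beta> \<le> 1" by (simp_all add: \<alpha>_def \<beta>_def)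
  have Y0: "Y0 \<subseteq> {Suc f..bar n (Suc f)}" "finite Y0" by (auto simp: Y0_def g_def)
  have sorted_Y: "sorted_list_of_set Y = replicate \<alpha> f @ sorted_list_of_set Y0 @ replicate \<beta> g"
    using sorted_list_of_set_window[of Y f g] Suc.prems f by (simp add: Y0_def \<alpha>_def \<beta>_def g_def)
  then have card_Y: "card Y = \<alpha> + card Y0 + \<beta>"
    using Suc.prems finite_subset[of Y "{f..bar n f}"] length_sorted_list_of_set[of Y] Y0(2) by simp
  have "dual n (Suc f) Y0 = dual n (Suc f) Y"
    unfolding Y0_def g_def by (rule dual_Int_window[of n "Suc f" Y, unfolded atLeastAtMost_Suc_bar])
  then have mid_Y: "mid_word n (dual n f Y) = replicate (1 - \<beta>) f @ Z0 @ replicate (1 - \<alpha>) g"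
    using mid_word_dual_Suc[OF f(2), of Y] by (simp add: Z0_def \<alpha>_def \<beta>_def g_def)
  have "card Y0 \<le> 2 * (n - f)"
    using card_window_le[of Y f n] by (simp add: Y0_def g_def)
  moreover have "length Z0 = 2 * (n - f) - card Y0 + 2"
    using length_mid_word[of "dual n (Suc f) Y0" n] card_dual[of n "Suc f" Y0] Y0(1)
    by (simp add: Z0_def Int_absorb2)
  ultimately have len: "card Y0 + length Z0 = 2 * (n - f + 1)" by simp
  have IH: "weight_equiv (zJ n Q) (replicate k1' (Suc f) @ sorted_list_of_set Y0 @ replicate k1' (bar n (Suc f)))
      (replicate k2' (Suc f) @ Z0 @ replicate k2' (bar n (Suc f)))"
    if "length (sorted_list_of_set Y0) + k1' = n - f + 1 + k2'" for k1' k2'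
    using Suc.hyps(1)[of "Suc f" Y0 k1' k2'] Suc.hyps(2) f Y0 that by (simp add: Z0_def)
  have "weight_equiv (zJ n Q) (replicate (k1 + \<alpha>) f @ sorted_list_of_set Y0 @ replicate (\<beta> + k1) g)
      (replicate (k2 + (1 - \<beta>)) f @ Z0 @ replicate ((1 - \<alpha>) + k2) g)"
  proof (rule weight_equiv_peel[where L = "n - f + 1"])
    show "weight_equiv (zJ n Q) (replicate d f @ w @ replicate d g)
        (replicate d (Suc f) @ w @ replicate d (bar n (Suc f)))" if "d + length w = n - f + 1" for d w
      using weight_equiv_replicate_shift[OF Qnz f that] by (simp add: g_def)
    show "length (sorted_list_of_set Y0) + length Z0 = 2 * (n - f + 1)"
      "k1 + \<alpha> + ((1 - \<alpha>) + k2) = k2 + (1 - \<beta>) + (\<beta> + k1)"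
      "k1 + \<alpha> + (\<beta> + k1) + length (sorted_list_of_set Y0) = k2 + (1 - \<beta>) + ((1 - \<alpha>) + k2) + length Z0"
      using len Y0(2) Suc.prems(4) card_Y \<open>\<alpha> \<le> 1\<close> \<open>\<beta> \<le> 1\<close> by auto
  qed (fact IH)
  then show ?case unfolding g_def[symmetric] by (simp add: sorted_Y mid_Y replicate_add)
qed

lemma mid_word_Un:
  assumes "finite A" "finite C" "\<forall>x\<in>A. x < c" "\<forall>x\<in>C. bar n c < x" "D \<subseteq> {c..bar n c}" "c \<le> n"
  shows "mid_word n (A \<union> D \<union> C) = sorted_list_of_set A @ mid_word n D @ sorted_list_of_set C"
proof -
  have "finite D" using assms(5) finite_subset by blast
  have "{x \<in> A \<union> D \<union> C. x \<le> n} = A \<union> {x \<in> D. x \<le> n}" "{x \<in> A \<union> D \<union> C. n < x} = {x \<in> D. n < x} \<union> C"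
    using assms by fastforce+
  moreover have "sorted_list_of_set (A \<union> {x \<in> D. x \<le> n}) = sorted_list_of_set A @ sorted_list_of_set {x \<in> D. x \<le> n}"
    using assms \<open>finite D\<close> by (intro sorted_list_of_set_Un_less) fastforce+
  moreover have "sorted_list_of_set ({x \<in> D. n < x} \<union> C) = sorted_list_of_set {x \<in> D. n < x} @ sorted_list_of_set C"
    using assms \<open>finite D\<close> by (intro sorted_list_of_set_Un_less) fastforce+
  ultimately show ?thesis by (simp add: mid_word_def)
qed

lemma weight_equiv_reflect:
  assumes Qnz: "\<forall>b\<in>{1..n}. \<forall>v. Q b v \<noteq> 0" and "finite X" "tight n X c"
  shows "weight_equiv (zJ n Q) (sorted_list_of_set X) (mid_word n (reflect n c X))"
proof -
  have c: "1 \<le> c" "c \<le> n" using assms(3) by (auto simp: tight_def)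
  define A where "A = X \<inter> {..<c}"
  define Y where "Y = X \<inter> {c..bar n c}"
  define C where "C = X \<inter> {bar n c<..}"
  have "sorted_list_of_set X = sorted_list_of_set A @ sorted_list_of_set Y @ sorted_list_of_set C"
    unfolding A_def Y_def C_def using assms(2) c by (intro sorted_list_of_set_split3) auto
  moreover have "reflect n c X = A \<union> dual n c Y \<union> C"
    unfolding reflect_def A_def C_def Y_def dual_Int_window by auto
  then have "mid_word n (reflect n c X) = sorted_list_of_set A @ mid_word n (dual n c Y) @ sorted_list_of_set C"
    using mid_word_Un[of A C c n "dual n c Y"] assms(2) c dual_subset[of n c Y]
    by (simp add: A_def C_def)
  moreover have "card Y = n - c + 2"
    using card_window_tight[OF assms(3)] assms(3) by (simp add: Y_def tight_def)
  then have "weight_equiv (zJ n Q) (sorted_list_of_set Y) (mid_word n (dual n c Y))"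
    using weight_equiv_dual[OF Qnz c, of Y 0 0] by (simp add: Y_def)
  ultimately show ?thesis by (simp add: weight_equiv_append_cong)
qed

lemma sum_violated_eq_sum_mid_word:
  assumes Qnz: "\<forall>b\<in>{1..n}. \<forall>v. Q b v \<noteq> 0" and "a \<le> n"
  shows "(\<Sum>X | X \<subseteq> {1..2 * n} \<and> card X = a \<and> (\<exists>c. violated n X c). word_weight (zJ n Q) (sorted_list_of_set X) v)
       = (\<Sum>M | M \<subseteq> {1..2 * n} \<and> card M + 2 = a. word_weight (zJ n Q) (mid_word n M) v)"
proof -
  let ?c = "\<lambda>X. Max {c. tight n X c}"
  have "(\<Sum>M | M \<subseteq> {1..2 * n} \<and> card M + 2 = a. word_weight (zJ n Q) (mid_word n M) v)
      = (\<Sum>X | X \<subseteq> {1..2 * n} \<and> card X = a \<and> (\<exists>c. tight n X c).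
          word_weight (zJ n Q) (mid_word n (reflect n (?c X) X)) v)"
    by (rule sum.reindex_bij_betw[symmetric, OF bij_betw_reflect_Max_tight[OF assms(2)]])
  also have "\<dots> = (\<Sum>X | X \<subseteq> {1..2 * n} \<and> card X = a \<and> (\<exists>c. tight n X c).
      word_weight (zJ n Q) (sorted_list_of_set X) v)"
  proof (rule sum.cong[OF refl])
    fix X assume "X \<in> {X. X \<subseteq> {1..2 * n} \<and> card X = a \<and> (\<exists>c. tight n X c)}"
    then have "finite X" "tight n X (?c X)"
      using finite_subset Max_in[OF finite_tight] by auto
    then show "word_weight (zJ n Q) (mid_word n (reflect n (?c X) X)) v = word_weight (zJ n Q) (sorted_list_of_set X) v"
      using weight_equiv_reflect[OF Qnz] by (simp add: weight_equiv_def)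
  qed
  finally show ?thesis by (simp add: ex_tight_iff_ex_violated)
qed

section \<open>Words in the letters \<open>x\<close>\<close>

definition embed_letter :: "nat \<Rightarrow> nat \<Rightarrow> nat" where
  "embed_letter n x = (if x \<le> n then x else x + 2)"

lemma strict_mono_embed_letter: "strict_mono (embed_letter n)"
  by (auto simp: strict_mono_def embed_letter_def)

lemma word_weight_xx_embed_letter: "word_weight (xx n Q) (map (embed_letter n) xs) v = word_weight (zJ n Q) xs v"
  unfolding word_weight_map by (rule word_weight_cong) (auto simp: embed_letter_def xx_def zJ_def)

lemma embed_letter_image_Un_mid:
  assumes "M \<subseteq> {1..2 * n}" "E \<subseteq> {n + 1, n + 2}"
  shows "embed_letter n ` M \<union> E \<subseteq> {1..2 * n + 2}" "(embed_letter n ` M \<union> E) \<inter> {n + 1, n + 2} = E"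
    "{x \<in> {1..2 * n}. embed_letter n x \<in> embed_letter n ` M \<union> E} = M"
    "card (embed_letter n ` M \<union> E) = card M + card E"
proof -
  have not_mid: "embed_letter n x \<in> {1..2 * n + 2} - {n + 1, n + 2}" if "x \<in> {1..2 * n}" for x
    using that by (auto simp: embed_letter_def)
  have inj: "inj (embed_letter n)" using strict_mono_embed_letter by (rule strict_mono_imp_inj_on)
  show "embed_letter n ` M \<union> E \<subseteq> {1..2 * n + 2}"
    using assms not_mid by auto
  show "(embed_letter n ` M \<union> E) \<inter> {n + 1, n + 2} = E"
    using assms not_mid by blast
  show "{x \<in> {1..2 * n}. embed_letter n x \<in> embed_letter n ` M \<union> E} = M"
    using assms not_mid inj_image_mem_iff[OF inj] by blast
  have "finite M" "finite E" "embed_letter n ` M \<inter> E = {}"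
    using assms not_mid finite_subset[OF assms(1)] finite_subset[OF assms(2)] by blast+
  then show "card (embed_letter n ` M \<union> E) = card M + card E"
    by (simp add: card_Un_disjoint card_image inj_on_subset[OF inj])
qed

lemma embed_letter_preimage_Un_mid:
  assumes "S \<subseteq> {1..2 * n + 2}"
  shows "embed_letter n ` {x \<in> {1..2 * n}. embed_letter n x \<in> S} \<union> (S \<inter> {n + 1, n + 2}) = S"
proof -
  have "y \<in> embed_letter n ` {x \<in> {1..2 * n}. embed_letter n x \<in> S}" if "y \<in> S" "y \<notin> {n + 1, n + 2}" for y
  proof (cases "y \<le> n")
    case True
    then show ?thesis using that assms by (intro image_eqI[of _ _ y]) (auto simp: embed_letter_def)
  next
    case False
    with that assms have "embed_letter n (y - 2) = y" "y - 2 \<in> {1..2 * n}"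
      by (auto simp: embed_letter_def)
    then show ?thesis using that by (intro image_eqI[of _ _ "y - 2"]) auto
  qed
  then show ?thesis by auto
qed

lemma bij_betw_embed_letter_Un_mid:
  assumes "E \<subseteq> {n + 1, n + 2}"
  shows "bij_betw (\<lambda>M. embed_letter n ` M \<union> E) {M. M \<subseteq> {1..2 * n} \<and> card M + card E = a}
    {S. S \<subseteq> {1..2 * n + 2} \<and> card S = a \<and> S \<inter> {n + 1, n + 2} = E}"
proof (rule bij_betw_byWitness[where f' = "\<lambda>S. {x \<in> {1..2 * n}. embed_letter n x \<in> S}"])
  show "(\<lambda>S. {x \<in> {1..2 * n}. embed_letter n x \<in> S}) ` {S. S \<subseteq> {1..2 * n + 2} \<and> card S = a \<and> S \<inter> {n + 1, n + 2} = E}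
      \<subseteq> {M. M \<subseteq> {1..2 * n} \<and> card M + card E = a}"
  proof clarify
    fix S assume S: "S \<subseteq> {1..2 * n + 2}" "E = S \<inter> {n + 1, n + 2}"
    let ?M = "{x \<in> {1..2 * n}. embed_letter n x \<in> S}"
    have "?M \<subseteq> {1..2 * n}" by auto
    then have "card (embed_letter n ` ?M \<union> E) = card ?M + card E"
      using embed_letter_image_Un_mid(4) assms by blast
    then show "?M \<subseteq> {1..2 * n} \<and> card ?M + card (S \<inter> {n + 1, n + 2}) = card S"
      using embed_letter_preimage_Un_mid[OF S(1)] S(2) by auto
  qed
next
  show "\<forall>M\<in>{M. M \<subseteq> {1..2 * n} \<and> card M + card E = a}.
      {x \<in> {1..2 * n}. embed_letter n x \<in> embed_letter n ` M \<union> E} = M"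
    using embed_letter_image_Un_mid(3)[OF _ assms] by simp
  show "\<forall>S\<in>{S. S \<subseteq> {1..2 * n + 2} \<and> card S = a \<and> S \<inter> {n + 1, n + 2} = E}.
      embed_letter n ` {x \<in> {1..2 * n}. embed_letter n x \<in> S} \<union> E = S"
  proof
    fix S assume "S \<in> {S. S \<subseteq> {1..2 * n + 2} \<and> card S = a \<and> S \<inter> {n + 1, n + 2} = E}"
    then show "embed_letter n ` {x \<in> {1..2 * n}. embed_letter n x \<in> S} \<union> E = S"
      using embed_letter_preimage_Un_mid[of S n] by simp
  qed
  show "(\<lambda>M. embed_letter n ` M \<union> E) ` {M. M \<subseteq> {1..2 * n} \<and> card M + card E = a}
      \<subseteq> {S. S \<subseteq> {1..2 * n + 2} \<and> card S = a \<and> S \<inter> {n + 1, n + 2} = E}"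
  proof clarify
    fix M assume "M \<subseteq> {1..2 * n}" "a = card M + card E"
    then show "embed_letter n ` M \<union> E \<subseteq> {1..2 * n + 2} \<and> card (embed_letter n ` M \<union> E) = card M + card E
        \<and> (embed_letter n ` M \<union> E) \<inter> {n + 1, n + 2} = E"
      using embed_letter_image_Un_mid(1,2,4)[OF _ assms] by simp
  qed
qed

lemma sorted_list_of_set_embed_letter_Un_mid:
  assumes "finite M"
  shows "sorted_list_of_set (embed_letter n ` M \<union> {n + 1, n + 2})
    = map (embed_letter n) (sorted_list_of_set {x \<in> M. x \<le> n}) @ [n + 1, n + 2]
      @ map (embed_letter n) (sorted_list_of_set {x \<in> M. n < x})"
proof -
  have sorted_image: "sorted_list_of_set (embed_letter n ` A) = map (embed_letter n) (sorted_list_of_set A)"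
    if "A \<subseteq> M" for A
    using that assms monotone_on_subset[OF strict_mono_embed_letter]
    by (intro sorted_list_of_set_image_strict_mono_on) (auto intro: finite_subset)
  let ?low = "embed_letter n ` {x \<in> M. x \<le> n}" and ?high = "embed_letter n ` {x \<in> M. n < x}"
  have bounds: "\<forall>x\<in>?low. x \<le> n" "\<forall>x\<in>?high. n + 2 < x" by (auto simp: embed_letter_def)
  have "embed_letter n ` M \<union> {n + 1, n + 2} = ?low \<union> ({n + 1, n + 2} \<union> ?high)"
    by (auto simp: embed_letter_def)
  moreover have "sorted_list_of_set (?low \<union> ({n + 1, n + 2} \<union> ?high))
      = sorted_list_of_set ?low @ sorted_list_of_set ({n + 1, n + 2} \<union> ?high)"
    by (rule sorted_list_of_set_Un_less) (use assms bounds in fastforce)+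
  moreover have "sorted_list_of_set ({n + 1, n + 2} \<union> ?high) = [n + 1, n + 2] @ sorted_list_of_set ?high"
    using sorted_list_of_set_Un_less[of "{n + 1, n + 2}" ?high] assms bounds by fastforce
  ultimately have "sorted_list_of_set (embed_letter n ` M \<union> {n + 1, n + 2})
      = sorted_list_of_set ?low @ [n + 1, n + 2] @ sorted_list_of_set ?high"
    by (simp only:)
  then show ?thesis by (simp add: sorted_image)
qed

lemma sum_xx_no_mid:
  "(\<Sum>S | S \<subseteq> {1..2 * n + 2} \<and> card S = a \<and> S \<inter> {n + 1, n + 2} = {}.
      word_weight (xx n Q) (sorted_list_of_set S) v)
   = (\<Sum>X | X \<subseteq> {1..2 * n} \<and> card X = a. word_weight (zJ n Q) (sorted_list_of_set X) v)"
proof -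
  have "(\<Sum>X | X \<subseteq> {1..2 * n} \<and> card X = a. word_weight (zJ n Q) (sorted_list_of_set X) v)
      = (\<Sum>X | X \<subseteq> {1..2 * n} \<and> card X = a.
          word_weight (xx n Q) (sorted_list_of_set (embed_letter n ` X \<union> {})) v)"
  proof (rule sum.cong[OF refl])
    fix X assume "X \<in> {X. X \<subseteq> {1..2 * n} \<and> card X = a}"
    then have "sorted_list_of_set (embed_letter n ` X) = map (embed_letter n) (sorted_list_of_set X)"
      using monotone_on_subset[OF strict_mono_embed_letter] finite_subset
      by (intro sorted_list_of_set_image_strict_mono_on) auto
    then show "word_weight (zJ n Q) (sorted_list_of_set X) v
        = word_weight (xx n Q) (sorted_list_of_set (embed_letter n ` X \<union> {})) v"
      by (simp add: word_weight_xx_embed_letter)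
  qed
  also have "\<dots> = (\<Sum>S | S \<subseteq> {1..2 * n + 2} \<and> card S = a \<and> S \<inter> {n + 1, n + 2} = {}.
      word_weight (xx n Q) (sorted_list_of_set S) v)"
    using sum.reindex_bij_betw[OF bij_betw_embed_letter_Un_mid[of "{}" n a]] by simp
  finally show ?thesis ..
qed

lemma sum_xx_both_mid:
  assumes Qnz: "\<forall>b\<in>{1..n}. \<forall>v. Q b v \<noteq> 0" and "1 \<le> n"
  shows "(\<Sum>S | S \<subseteq> {1..2 * n + 2} \<and> card S = a \<and> S \<inter> {n + 1, n + 2} = {n + 1, n + 2}.
      word_weight (xx n Q) (sorted_list_of_set S) v)
   = - (\<Sum>M | M \<subseteq> {1..2 * n} \<and> card M + 2 = a. word_weight (zJ n Q) (mid_word n M) v)"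
proof -
  have pair: "xx n Q (Suc n) t * xx n Q (Suc (Suc n)) (t - 1) = - (zJ n Q n t * zJ n Q (Suc n) (t - 1))" for t
    using xmid_mult_xmid[OF Qnz assms(2), of t] by (simp add: xx_def)
  have "(\<Sum>M | M \<subseteq> {1..2 * n} \<and> card M + 2 = a. word_weight (zJ n Q) (mid_word n M) v)
      = (\<Sum>M | M \<subseteq> {1..2 * n} \<and> card M + card {n + 1, n + 2} = a.
          - word_weight (xx n Q) (sorted_list_of_set (embed_letter n ` M \<union> {n + 1, n + 2})) v)"
  proof (rule sum.cong)
    fix M assume "M \<in> {M. M \<subseteq> {1..2 * n} \<and> card M + card {n + 1, n + 2} = a}"
    then have "finite M" using finite_subset by auto
    then show "word_weight (zJ n Q) (mid_word n M) v
        = - word_weight (xx n Q) (sorted_list_of_set (embed_letter n ` M \<union> {n + 1, n + 2})) v"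
      unfolding sorted_list_of_set_embed_letter_Un_mid[OF \<open>finite M\<close>] mid_word_def
      by (simp add: word_weight_pair word_weight_xx_embed_letter pair)
  qed simp
  also have "\<dots> = - (\<Sum>S | S \<subseteq> {1..2 * n + 2} \<and> card S = a \<and> S \<inter> {n + 1, n + 2} = {n + 1, n + 2}.
      word_weight (xx n Q) (sorted_list_of_set S) v)"
    using sum.reindex_bij_betw[OF bij_betw_embed_letter_Un_mid[of "{n + 1, n + 2}" n a]]
    by (simp add: sum_negf)
  finally show ?thesis by simp
qed

lemma word_weight_xx_swap_mid:
  assumes "finite S" "n + 1 \<notin> S" "n + 2 \<in> S"
  shows "word_weight (xx n Q) (sorted_list_of_set (insert (n + 1) (S - {n + 2}))) v
       = - word_weight (xx n Q) (sorted_list_of_set S) v"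
proof -
  let ?S' = "insert (n + 1) (S - {n + 2})"
  have parts: "S \<inter> {n + 1..n + 2} = {n + 2}" "?S' \<inter> {n + 1..n + 2} = {n + 1}"
    "?S' \<inter> {..<n + 1} = S \<inter> {..<n + 1}" "?S' \<inter> {n + 2<..} = S \<inter> {n + 2<..}"
    using assms by (auto simp: le_Suc_eq)
  have "sorted_list_of_set S = sorted_list_of_set (S \<inter> {..<n + 1}) @ [n + 2] @ sorted_list_of_set (S \<inter> {n + 2<..})"
    using sorted_list_of_set_split3[of S "n + 1" "n + 2"] assms(1) unfolding parts by simp
  moreover have "sorted_list_of_set ?S'
      = sorted_list_of_set (S \<inter> {..<n + 1}) @ [n + 1] @ sorted_list_of_set (S \<inter> {n + 2<..})"
    using sorted_list_of_set_split3[of ?S' "n + 1" "n + 2"] assms(1) unfolding parts by simp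
  ultimately
  show ?thesis by (simp add: word_weight_append xx_def)
qed

lemma sum_xx_swap_mid:
  "(\<Sum>S | S \<subseteq> {1..2 * n + 2} \<and> card S = a \<and> S \<inter> {n + 1, n + 2} = {n + 2}.
      word_weight (xx n Q) (sorted_list_of_set S) v)
   = - (\<Sum>S | S \<subseteq> {1..2 * n + 2} \<and> card S = a \<and> S \<inter> {n + 1, n + 2} = {n + 1}.
      word_weight (xx n Q) (sorted_list_of_set S) v)"
  unfolding sum_negf[symmetric]
proof (rule sum.reindex_bij_witness[where j = "\<lambda>S. insert (n + 1) (S - {n + 2})"
      and i = "\<lambda>S. insert (n + 2) (S - {n + 1})"])
  fix S assume S: "S \<in> {S. S \<subseteq> {1..2 * n + 2} \<and> card S = a \<and> S \<inter> {n + 1, n + 2} = {n + 2}}"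
  then have "n + 1 \<notin> S \<inter> {n + 1, n + 2}" "n + 2 \<in> S \<inter> {n + 1, n + 2}" "finite S"
    using finite_subset by auto
  then have "finite S" "n + 1 \<notin> S" "n + 2 \<in> S" by auto
  then have "0 < card S" by (auto simp: card_gt_0_iff)
  show "insert (n + 2) (insert (n + 1) (S - {n + 2}) - {n + 1}) = S"
    using \<open>n + 1 \<notin> S\<close> \<open>n + 2 \<in> S\<close> by auto
  show "- word_weight (xx n Q) (sorted_list_of_set (insert (n + 1) (S - {n + 2}))) v
       = word_weight (xx n Q) (sorted_list_of_set S) v"
    using word_weight_xx_swap_mid[OF \<open>finite S\<close> \<open>n + 1 \<notin> S\<close> \<open>n + 2 \<in> S\<close>] by simp
  show "insert (n + 1) (S - {n + 2})
      \<in> {S. S \<subseteq> {1..2 * n + 2} \<and> card S = a \<and> S \<inter> {n + 1, n + 2} = {n + 1}}"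
    using S \<open>finite S\<close> \<open>n + 1 \<notin> S\<close> \<open>n + 2 \<in> S\<close> \<open>0 < card S\<close> by (auto simp: card_insert_if)
next
  fix S assume S: "S \<in> {S. S \<subseteq> {1..2 * n + 2} \<and> card S = a \<and> S \<inter> {n + 1, n + 2} = {n + 1}}"
  then have "n + 1 \<in> S \<inter> {n + 1, n + 2}" "n + 2 \<notin> S \<inter> {n + 1, n + 2}" "finite S"
    using finite_subset by auto
  then have "finite S" "n + 1 \<in> S" "n + 2 \<notin> S" by auto
  then have "0 < card S" by (auto simp: card_gt_0_iff)
  show "insert (n + 1) (insert (n + 2) (S - {n + 1}) - {n + 2}) = S"
    using \<open>n + 1 \<in> S\<close> \<open>n + 2 \<notin> S\<close> by auto
  show "insert (n + 2) (S - {n + 1})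
      \<in> {S. S \<subseteq> {1..2 * n + 2} \<and> card S = a \<and> S \<inter> {n + 1, n + 2} = {n + 2}}"
    using S \<open>finite S\<close> \<open>n + 1 \<in> S\<close> \<open>n + 2 \<notin> S\<close> \<open>0 < card S\<close> by (auto simp: card_insert_if)
qed

lemma sum_xx_subsets:
  assumes Qnz: "\<forall>b\<in>{1..n}. \<forall>v. Q b v \<noteq> 0" and "1 \<le> n"
  shows "(\<Sum>S | S \<subseteq> {1..2 * n + 2} \<and> card S = a. word_weight (xx n Q) (sorted_list_of_set S) v)
   = (\<Sum>X | X \<subseteq> {1..2 * n} \<and> card X = a. word_weight (zJ n Q) (sorted_list_of_set X) v)
     - (\<Sum>M | M \<subseteq> {1..2 * n} \<and> card M + 2 = a. word_weight (zJ n Q) (mid_word n M) v)"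
proof -
  let ?G = "\<lambda>E. {S. S \<subseteq> {1..2 * n + 2} \<and> card S = a \<and> S \<inter> {n + 1, n + 2} = E}"
  let ?h = "\<lambda>S. word_weight (xx n Q) (sorted_list_of_set S) v"
  have "finite {S. S \<subseteq> {1..2 * n + 2} \<and> card S = a}"
    by (rule finite_subset[of _ "Pow {1..2 * n + 2}"]) auto
  then have "(\<Sum>E\<in>Pow {n + 1, n + 2}. sum ?h {S \<in> {S. S \<subseteq> {1..2 * n + 2} \<and> card S = a}. S \<inter> {n + 1, n + 2} = E})
      = (\<Sum>S | S \<subseteq> {1..2 * n + 2} \<and> card S = a. ?h S)"
    by (rule sum.group) auto
  then have "(\<Sum>S | S \<subseteq> {1..2 * n + 2} \<and> card S = a. ?h S) = (\<Sum>E\<in>Pow {n + 1, n + 2}. sum ?h (?G E))"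
    by (simp add: conj_assoc)
  also have "Pow {n + 1, n + 2} = {{}, {n + 1}, {n + 2}, {n + 1, n + 2}}"
    by (auto simp: Pow_insert)
  also have "(\<Sum>E\<in>{{}, {n + 1}, {n + 2}, {n + 1, n + 2}}. sum ?h (?G E))
      = sum ?h (?G {}) + sum ?h (?G {n + 1}) + sum ?h (?G {n + 2}) + sum ?h (?G {n + 1, n + 2})"
    by (simp add: doubleton_eq_iff)
  finally show ?thesis
    using sum_xx_no_mid sum_xx_swap_mid sum_xx_both_mid[OF assms] by simp
qed

theorem mainTheorem3:
  fixes n a :: nat and Q :: "nat \<Rightarrow> complex \<Rightarrow> complex" and u :: complex
  assumes "n \<ge> 2"
    and "\<forall>b\<in>{1..n}. \<forall>v. Q b v \<noteq> 0"
    and "1 \<le> a" and "a \<le> n"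
  shows "T1 n Q a u =
    (\<Sum>i\<in>{i \<in> {1..a} \<rightarrow>\<^sub>E {1..2 * n + 2}. \<forall>k\<in>{1..a}. \<forall>l\<in>{1..a}. k < l \<longrightarrow> i k < i l}.
       \<Prod>k\<in>{1..a}. xx n Q (i k) (u + of_nat a / 2 - of_nat k))"
proof -
  let ?v = "u + of_nat a / 2"
  let ?W = "\<lambda>X. word_weight (zJ n Q) (sorted_list_of_set X) (?v - 1)"
  have "(\<Sum>i\<in>{i \<in> {1..a} \<rightarrow>\<^sub>E {1..2 * n + 2}. \<forall>k\<in>{1..a}. \<forall>l\<in>{1..a}. k < l \<longrightarrow> i k < i l}.
       \<Prod>k\<in>{1..a}. xx n Q (i k) (?v - of_nat k))
      = (\<Sum>S | S \<subseteq> {1..2 * n + 2} \<and> card S = a. word_weight (xx n Q) (sorted_list_of_set S) (?v - 1))"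
    by (rule sum_increasing_tuples) simp
  also have "\<dots> = (\<Sum>X | X \<subseteq> {1..2 * n} \<and> card X = a. ?W X)
      - (\<Sum>M | M \<subseteq> {1..2 * n} \<and> card M + 2 = a. word_weight (zJ n Q) (mid_word n M) (?v - 1))"
    using sum_xx_subsets[OF assms(2)] assms(1) by simp
  also have "\<dots> = (\<Sum>X | X \<subseteq> {1..2 * n} \<and> card X = a \<and> \<not> (\<exists>c. violated n X c). ?W X)"
    using sum_subsets_split[where h = ?W and R = "\<lambda>X. \<exists>c. violated n X c"]
      sum_violated_eq_sum_mid_word[OF assms(2,4)] by simp
  also have "\<dots> = T1 n Q a u"
    by (simp add: T1_eq_sum_not_violated)
  finally show ?thesis ..
qed

end
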